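(* For each $c<\frac14$ there is $\lambda_0$ such that for all $\lambda>\lambda_0$ and all even rectangles $\Lambda$, $$Z^{\mathrm{per}}_{\Lambda,\lambda}\ge e^{c\lambda^{-1/2}\mathrm{Area}(\Lambda)}.$$
   Context: Tiles: $T_{(x,y)}=[x-1,x+1]\times[y-1,y+1]$; $\Omega=\{\sigma\in\{0,1\}^{\mathbb{Z}^2}: \sigma(u)=\sigma(v)=1,u\ne v\Rightarrow\mathrm{int}(T_u)\cap\mathrm{int}(T_v)=\emptyset\}$. A rectangle $[x,x+K]\times[y,y+L]$ (integers, $K,L\ge1$) is even if $x,y,K,L$ are even; $\mathrm{Area}=KL$. Faces: unit squares with integer corners; vacant if in no tile. $w_{\Lambda,\lambda}(\sigma)=\lambda^{-\frac14\#\{\text{vacant faces}\subset\Lambda\}}$; $\Omega^{\mathrm{per}}_\Lambda$ = configurations periodic under $(\mathrm{Width}\Lambda,0),(0,\mathrm{Height}\Lambda)$; $Z^{\mathrm{per}}_{\Lambda,\lambda}=\sum_{\sigma\in\Omega^{\mathrm{per}}_\Lambda}w_{\Lambda,\lambda}(\sigma)$. *)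

theory Defs
  imports "HOL-Analysis.Analysis"
begin

type_synonym config = "int \<times> int \<Rightarrow> bool"

definition tile :: "int \<times> int \<Rightarrow> (real \<times> real) set" where
  "tile u = {real_of_int (fst u) - 1 .. real_of_int (fst u) + 1} \<times>
            {real_of_int (snd u) - 1 .. real_of_int (snd u) + 1}"

definition Omega :: "config set" where
  "Omega = {\<sigma>. \<forall>u v. \<sigma> u \<and> \<sigma> v \<and> u \<noteq> v \<longrightarrow> interior (tile u) \<inter> interior (tile v) = {}}"

definition rect :: "int \<Rightarrow> int \<Rightarrow> int \<Rightarrow> int \<Rightarrow> (real \<times> real) set" where
  "rect x y K L = {real_of_int x .. real_of_int (x + K)} \<times> {real_of_int y .. real_of_int (y + L)}"

definition even_rect :: "int \<Rightarrow> int \<Rightarrow> int \<Rightarrow> int \<Rightarrow> bool" where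
  "even_rect x y K L \<longleftrightarrow> K \<ge> 1 \<and> L \<ge> 1 \<and> even x \<and> even y \<and> even K \<and> even L"

definition face :: "int \<times> int \<Rightarrow> (real \<times> real) set" where
  "face p = {real_of_int (fst p) .. real_of_int (fst p) + 1} \<times>
            {real_of_int (snd p) .. real_of_int (snd p) + 1}"

definition vacant :: "config \<Rightarrow> int \<times> int \<Rightarrow> bool" where
  "vacant \<sigma> p \<longleftrightarrow> \<not> (\<exists>u. \<sigma> u \<and> face p \<subseteq> tile u)"

definition vacant_count :: "int \<Rightarrow> int \<Rightarrow> int \<Rightarrow> int \<Rightarrow> config \<Rightarrow> nat" where
  "vacant_count x y K L \<sigma> = card {p. vacant \<sigma> p \<and> face p \<subseteq> rect x y K L}"

definition weight :: "int \<Rightarrow> int \<Rightarrow> int \<Rightarrow> int \<Rightarrow> real \<Rightarrow> config \<Rightarrow> real" where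
  "weight x y K L lam \<sigma> = lam powr (- (1/4) * real (vacant_count x y K L \<sigma>))"

definition Omega_per :: "int \<Rightarrow> int \<Rightarrow> config set" where
  "Omega_per K L = {\<sigma> \<in> Omega. \<forall>u. \<sigma> (fst u + K, snd u) = \<sigma> u \<and> \<sigma> (fst u, snd u + L) = \<sigma> u}"

definition Z_per :: "int \<Rightarrow> int \<Rightarrow> int \<Rightarrow> int \<Rightarrow> real \<Rightarrow> real" where
  "Z_per x y K L lam = (\<Sum>\<sigma>\<in>Omega_per K L. weight x y K L lam \<sigma>)"

end

theory Submission
  imports Defs
begin

text \<open>Write \<open>t = \<lambda>\<^sup>-\<^sup>1\<^sup>/\<^sup>2\<close>. Cut the torus into \<open>K/2\<close> vertical strips of width 2 and fill each
  strip by a column of tiles with an even number of defects, each defect leaving one unit row of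
  the strip, i.e. two faces, vacant and hence costing a factor \<open>t\<close>. The columns are independent,
  and a column of height \<open>2n\<close> is determined by its defect set \<open>G\<close> and one phase bit, so it
  contributes twice the sum of \<open>t\<^bsup>|G|\<^esup>\<close> over the even subsets \<open>G\<close> of an \<open>n\<close>-set, which is at
  least \<open>(1 + t)\<^sup>n\<close>. Hence \<open>Z \<ge> (1 + t)\<^bsup>KL/4\<^esup>\<close>, and \<open>ln (1 + t) \<ge> t - t\<^sup>2 \<ge> 4ct\<close> once
  \<open>t \<le> 1 - 4c\<close>.\<close>

lemma sum_power_card_Pow:
  fixes t :: "'a :: comm_semiring_1"
  assumes "finite A"
  shows "(\<Sum>X\<in>Pow A. t ^ card X) = (1 + t) ^ card A"
  using prod_add[OF assms, of "\<lambda>_. t" "\<lambda>_. 1"] by (simp add: add.commute)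

lemma power_card_le_twice_sum_even_subsets:
  fixes t :: "'a :: linordered_idom"
  assumes "finite A" "0 \<le> t" "t \<le> 1"
  shows "(1 + t) ^ card A \<le> 2 * (\<Sum>G\<in>{G. G \<subseteq> A \<and> even (card G)}. t ^ card G)"
proof -
  have "(1 + t) ^ card A + (1 - t) ^ card A = (\<Sum>X\<in>Pow A. t ^ card X + (-t) ^ card X)"
    using sum_power_card_Pow[OF assms(1), of t] sum_power_card_Pow[OF assms(1), of "-t"]
    by (simp add: sum.distrib)
  also have "\<dots> = (\<Sum>X\<in>Pow A. if even (card X) then 2 * t ^ card X else 0)"
    by (rule sum.cong) auto
  also have "\<dots> = 2 * (\<Sum>G\<in>{G. G \<subseteq> A \<and> even (card G)}. t ^ card G)"
    using assms(1) by (simp add: sum.If_cases sum_distrib_left Int_def conj_commute)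
  finally show ?thesis
    using zero_le_power[of "1 - t" "card A"] assms(3) by linarith
qed

lemma periodic_int_shift:
  fixes g :: "int \<Rightarrow> 'a"
  assumes "\<And>z. g (z + d) = g z"
  shows "g (z + d*q) = g z"
proof (induction q rule: int_induct[where k = 0])
  case (step1 i)
  then show ?case using assms[of "z + d*i"] by (simp add: algebra_simps)
next
  case (step2 i)
  then show ?case using assms[of "z + d*(i - 1)"] by (simp add: algebra_simps)
qed simp

lemma Omega_per_shift:
  assumes "\<sigma> \<in> Omega_per K L"
  shows "\<sigma> (a + K*q, b + L*r) = \<sigma> (a, b)"
proof -
  have "\<sigma> (z + K, b') = \<sigma> (z, b')" "\<sigma> (a', z + L) = \<sigma> (a', z)" for z a' b'
    using assms by (auto simp: Omega_per_def dest: spec[of _ "(z, b')"] spec[of _ "(a', z)"])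
  then show ?thesis
    using periodic_int_shift[of "\<lambda>z. \<sigma> (z, b + L*r)" K a q]
      periodic_int_shift[of "\<lambda>z. \<sigma> (a, z)" L b r] by simp
qed

lemma Omega_per_finite:
  assumes "K \<ge> 1" "L \<ge> 1"
  shows "finite (Omega_per K L)"
proof -
  define box where "box = {0..<K} \<times> {0..<L}"
  define extend :: "(int \<times> int) set \<Rightarrow> config"
    where "extend S u \<longleftrightarrow> (fst u mod K, snd u mod L) \<in> S" for S u
  have "\<sigma> = extend {u \<in> box. \<sigma> u}" if "\<sigma> \<in> Omega_per K L" for \<sigma>
  proof
    fix u :: "int \<times> int"
    obtain a b where u: "u = (a, b)" by fastforce
    have "\<sigma> (a mod K + K*(a div K), b mod L + L*(b div L)) = \<sigma> (a mod K, b mod L)"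
      by (rule Omega_per_shift[OF that])
    then show "\<sigma> u = extend {u \<in> box. \<sigma> u} u"
      using assms by (simp add: u extend_def box_def)
  qed
  then have "Omega_per K L \<subseteq> extend ` Pow box" by blast
  then show ?thesis by (rule finite_subset) (simp add: box_def)
qed

text \<open>A column of height \<open>2n\<close> consists of the slots \<open>[2j, 2j + 2]\<close>, \<open>0 \<le> j < n\<close>. The state
  \<open>(G, p)\<close> puts the tile of slot \<open>j\<close> at height \<open>2j + 2\<close> if the slot is in phase and at
  \<open>2j + 1\<close> otherwise; the phase flips at each defect \<open>j \<in> G\<close> and \<open>p\<close> is the phase of the last
  slot. An out-of-phase defect slot gets no tile. Each defect leaves exactly one unit row uncovered,
  and \<open>G\<close> has even size so that the phases close up around the cycle.\<close>

definition defects_upto :: "int set \<Rightarrow> int \<Rightarrow> nat" where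
  "defects_upto G j = card {g \<in> G. g \<le> j}"

definition phase :: "int set \<Rightarrow> bool \<Rightarrow> int \<Rightarrow> bool" where
  "phase G p j \<longleftrightarrow> odd (defects_upto G j) \<noteq> p"

definition cyclic_pred :: "int \<Rightarrow> int \<Rightarrow> int" where
  "cyclic_pred n j = (if j = 0 then n - 1 else j - 1)"

definition column_states :: "int \<Rightarrow> (int set \<times> bool) set" where
  "column_states n = {(G, p). G \<subseteq> {0..<n} \<and> even (card G)}"

definition tile_centres :: "int \<Rightarrow> int set \<Rightarrow> bool \<Rightarrow> int set" where
  "tile_centres n G p = {c. \<exists>j. 0 \<le> j \<and> j < n \<and>
     (c = 2*j + 2 \<and> phase G p j \<or> c = 2*j + 1 \<and> \<not> phase G p j \<and> j \<notin> G)}"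

definition vacant_rows :: "int set \<Rightarrow> bool \<Rightarrow> int set" where
  "vacant_rows G p = (\<lambda>j. 2*j + (if phase G p j then 0 else 1)) ` G"

lemma column_statesD:
  assumes "(G, p) \<in> column_states n"
  shows "G \<subseteq> {0..<n}" "even (card G)" "finite G"
  using assms finite_subset[of G "{0..<n}"] by (auto simp: column_states_def)

lemma defects_upto_step:
  assumes "finite G"
  shows "defects_upto G j = defects_upto G (j - 1) + (if j \<in> G then 1 else 0)"
proof -
  have "{g\<in>G. g \<le> j} = (if j \<in> G then insert j {g\<in>G. g \<le> j - 1} else {g\<in>G. g \<le> j - 1})"
    by auto (metis order_le_less)
  moreover have "finite {g\<in>G. g \<le> j - 1}" using assms by simp
  ultimately show ?thesis unfolding defects_upto_def by auto
qed

lemma defect_iff_phase_change: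
  assumes "(G, p) \<in> column_states n" "0 \<le> j" "j < n"
  shows "j \<in> G \<longleftrightarrow> phase G p j \<noteq> phase G p (cyclic_pred n j)"
proof (cases "j = 0")
  case True
  have "{g\<in>G. g \<le> n - 1} = G" "{g\<in>G. g \<le> 0} = G \<inter> {0}"
    using column_statesD(1)[OF assms(1)] by auto
  then have "defects_upto G (n - 1) = card G" "defects_upto G 0 = (if 0 \<in> G then 1 else 0)"
    by (auto simp: defects_upto_def)
  then show ?thesis
    using True column_statesD(2)[OF assms(1)] by (auto simp: phase_def cyclic_pred_def)
next
  case False
  then show ?thesis
    using defects_upto_step[OF column_statesD(3)[OF assms(1)], of j]
    by (auto simp: phase_def cyclic_pred_def)
qed

lemma phase_last:
  assumes "(G, p) \<in> column_states n"
  shows "phase G p (n - 1) = p"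
proof -
  have "{g\<in>G. g \<le> n - 1} = G" using column_statesD(1)[OF assms] by auto
  then show ?thesis using column_statesD(2)[OF assms] by (simp add: phase_def defects_upto_def)
qed

lemma column_state_eqI:
  assumes "(G, p) \<in> column_states n" "(G', p') \<in> column_states n" "n \<ge> 1"
    and "\<And>j. 0 \<le> j \<Longrightarrow> j < n \<Longrightarrow> phase G p j = phase G' p' j"
  shows "(G, p) = (G', p')"
proof -
  have "p = p'"
    using phase_last[OF assms(1)] phase_last[OF assms(2)] assms(3) assms(4)[of "n - 1"] by auto
  moreover have "j \<in> G \<longleftrightarrow> j \<in> G'" for j
  proof (cases "0 \<le> j \<and> j < n")
    case True
    then have "0 \<le> cyclic_pred n j \<and> cyclic_pred n j < n" by (auto simp: cyclic_pred_def)
    with True show ?thesis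
      using defect_iff_phase_change[OF assms(1)] defect_iff_phase_change[OF assms(2)]
        assms(4)[of j] assms(4)[of "cyclic_pred n j"] by auto
  next
    case False
    then show ?thesis using column_statesD(1)[OF assms(1)] column_statesD(1)[OF assms(2)] by auto
  qed
  ultimately show ?thesis by auto
qed

lemma tile_centres_range: "c \<in> tile_centres n G p \<Longrightarrow> 1 \<le> c \<and> c \<le> 2*n"
  unfolding tile_centres_def by auto

lemma in_phase_centre_iff:
  assumes "0 \<le> j" "j < n"
  shows "2*j + 2 \<in> tile_centres n G p \<longleftrightarrow> phase G p j"
  using assms unfolding tile_centres_def by auto presburger

lemma out_of_phase_centre:
  "0 \<le> j \<Longrightarrow> j < n \<Longrightarrow> \<not> phase G p j \<Longrightarrow> j \<notin> G \<Longrightarrow> 2*j + 1 \<in> tile_centres n G p"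
  unfolding tile_centres_def by blast

lemma tile_centres_not_adjacent:
  assumes "(G, p) \<in> column_states n" "c \<in> tile_centres n G p" "c + 1 \<in> tile_centres n G p"
  shows False
proof -
  from assms(2) obtain j where j: "0 \<le> j" "j < n"
    "c = 2*j + 2 \<and> phase G p j \<or> c = 2*j + 1 \<and> \<not> phase G p j \<and> j \<notin> G"
    unfolding tile_centres_def by auto
  from assms(3) obtain k where k: "0 \<le> k" "k < n"
    "c + 1 = 2*k + 2 \<and> phase G p k \<or> c + 1 = 2*k + 1 \<and> \<not> phase G p k \<and> k \<notin> G"
    unfolding tile_centres_def by auto
  show False
  proof (cases "c = 2*j + 2")
    case True
    with j k have "k = j + 1" "\<not> phase G p k" "k \<notin> G" "phase G p j" by auto presburger+
    with defect_iff_phase_change[OF assms(1) k(1,2)] j(1) show False by (simp add: cyclic_pred_def)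
  next
    case False
    with j k show False by auto presburger
  qed
qed

lemma tile_centres_not_wrapping:
  assumes "(G, p) \<in> column_states n" "1 \<in> tile_centres n G p" "2*n \<in> tile_centres n G p"
  shows False
proof -
  from assms(2) have "\<not> phase G p 0" "0 \<notin> G" "0 < n"
    unfolding tile_centres_def by auto presburger+
  moreover have "phase G p (n - 1)"
    using assms(3) in_phase_centre_iff[of "n - 1" n G p] \<open>0 < n\<close> by simp
  ultimately show False
    using defect_iff_phase_change[OF assms(1), of 0] by (simp add: cyclic_pred_def)
qed

lemma card_vacant_rows_le: "finite G \<Longrightarrow> card (vacant_rows G p) \<le> card G"
  unfolding vacant_rows_def by (rule card_image_le)

lemma row_covered:
  assumes G: "(G, p) \<in> column_states n" and b: "0 \<le> b" "b < 2*n" "b \<notin> vacant_rows G p"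
  shows "\<exists>c\<in>tile_centres n G p. \<exists>q. c + 2*n*q - 1 \<le> b \<and> b \<le> c + 2*n*q"
proof -
  define j where "j = b div 2"
  have j: "0 \<le> j" "j < n" using b(1,2) unfolding j_def by auto
  have not_vacant: "b \<noteq> 2*j + (if phase G p j then 0 else 1)" if "j \<in> G"
    using b(3) that unfolding vacant_rows_def by blast
  have "b = 2*j + 1 \<or> b = 2*j" unfolding j_def by presburger
  then consider "b = 2*j + 1" | "b = 2*j" by blast
  then show ?thesis
  proof cases
    case 1
    then obtain c where "c \<in> tile_centres n G p" "c = 2*j + 2 \<or> c = 2*j + 1"
      using in_phase_centre_iff[OF j] out_of_phase_centre[OF j] not_vacant by fastforce
    then show ?thesis using 1 by (intro bexI[of _ c] exI[of _ 0]) auto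
  next
    case 2
    show ?thesis
    proof (cases "\<not> phase G p j \<and> j \<notin> G")
      case True
      then show ?thesis using 2 out_of_phase_centre[OF j] by (intro bexI[of _ "2*j + 1"] exI[of _ 0]) auto
    next
      case False
      then have "phase G p (cyclic_pred n j)"
        using defect_iff_phase_change[OF G j] not_vacant 2 by auto
      show ?thesis
      proof (cases "j = 0")
        case True
        with \<open>phase G p (cyclic_pred n j)\<close> have "2*(n - 1) + 2 \<in> tile_centres n G p"
          using in_phase_centre_iff[of "n - 1" n] j by (simp add: cyclic_pred_def)
        then show ?thesis using 2 True by (intro bexI[of _ "2*(n - 1) + 2"] exI[of _ "-1"]) auto
      next
        case False
        with \<open>phase G p (cyclic_pred n j)\<close> have "2*(j - 1) + 2 \<in> tile_centres n G p"
          using in_phase_centre_iff[of "j - 1" n] j by (simp add: cyclic_pred_def)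
        then show ?thesis using 2 by (intro bexI[of _ "2*(j - 1) + 2"] exI[of _ 0]) auto
      qed
    qed
  qed
qed

lemma tile_interiors_meet_close:
  assumes "interior (tile u) \<inter> interior (tile v) \<noteq> {}"
  shows "\<bar>fst u - fst v\<bar> < 2" "\<bar>snd u - snd v\<bar> < 2"
proof -
  obtain a b where "(a, b) \<in> interior (tile u)" "(a, b) \<in> interior (tile v)" using assms by auto
  then have "real_of_int \<bar>fst u - fst v\<bar> < 2" "real_of_int \<bar>snd u - snd v\<bar> < 2"
    by (auto simp: tile_def interior_Times)
  then show "\<bar>fst u - fst v\<bar> < 2" "\<bar>snd u - snd v\<bar> < 2" by linarith+
qed

lemma face_subset_tile:
  assumes "fst u - 1 \<le> a" "a \<le> fst u" "snd u - 1 \<le> b" "b \<le> snd u"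
  shows "face (a, b) \<subseteq> tile u"
proof -
  have "real_of_int (fst u) - 1 \<le> real_of_int a" "real_of_int a \<le> real_of_int (fst u)"
       "real_of_int (snd u) - 1 \<le> real_of_int b" "real_of_int b \<le> real_of_int (snd u)"
    using assms by linarith+
  then show ?thesis unfolding face_def tile_def by auto
qed

lemma face_subset_rect:
  assumes "face (a, b) \<subseteq> rect x y K L"
  shows "x \<le> a" "a + 1 \<le> x + K" "y \<le> b" "b + 1 \<le> y + L"
proof -
  have "(real_of_int a, real_of_int b) \<in> rect x y K L"
       "(real_of_int a + 1, real_of_int b + 1) \<in> rect x y K L"
    using assms unfolding face_def by auto
  then have "real_of_int x \<le> real_of_int a" "real_of_int a + 1 \<le> real_of_int (x + K)"
        "real_of_int y \<le> real_of_int b" "real_of_int b + 1 \<le> real_of_int (y + L)"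
    unfolding rect_def by auto
  then show "x \<le> a" "a + 1 \<le> x + K" "y \<le> b" "b + 1 \<le> y + L" by linarith+
qed

lemma periodic_odd_close_eq:
  fixes i i' q q' m :: int
  assumes "0 \<le> i" "i < m" "0 \<le> i'" "i' < m"
    and "\<bar>(2*i + 1 + 2*m*q) - (2*i' + 1 + 2*m*q')\<bar> < 2"
  shows "i = i'" "q = q'"
proof -
  define z where "z = i - i' + m*(q - q')"
  have "2*z = (2*i + 1 + 2*m*q) - (2*i' + 1 + 2*m*q')"
    by (simp add: z_def algebra_simps)
  with assms(5) have "z = 0" by simp
  then have diff: "i' - i = m*(q - q')" by (simp add: z_def)
  have "q - q' = 0"
  proof (rule ccontr)
    assume "q - q' \<noteq> 0"
    then have "m \<le> \<bar>m*(q - q')\<bar>" using assms(1,2) by (simp add: abs_mult)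
    with diff assms(1-4) show False by linarith
  qed
  with diff show "i = i'" "q = q'" by simp_all
qed

lemma periodic_close_cases:
  fixes c c' L r :: int
  assumes "1 \<le> c" "c \<le> L" "1 \<le> c'" "c' \<le> L" "\<bar>c - c' + L*r\<bar> < 2"
  shows "r = 0 \<and> \<bar>c - c'\<bar> < 2 \<or> r = 1 \<and> c = 1 \<and> c' = L \<or> r = -1 \<and> c = L \<and> c' = 1"
proof -
  consider "r \<ge> 2" | "r = 1" | "r = 0" | "r = -1" | "r \<le> -2" by linarith
  then show ?thesis
  proof cases
    case 1
    then have "L*r \<ge> L*2" using assms by (intro mult_left_mono) auto
    then show ?thesis using assms by linarith
  next
    case 5
    then have "L*r \<le> L*(-2)" using assms by (intro mult_left_mono) auto
    then show ?thesis using assms by linarith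
  qed (use assms in auto)
qed

definition column_config :: "int \<Rightarrow> int \<Rightarrow> int \<Rightarrow> int \<Rightarrow> (int \<Rightarrow> int set \<times> bool) \<Rightarrow> config" where
  "column_config x y m n f u \<longleftrightarrow> (\<exists>i q r c. 0 \<le> i \<and> i < m \<and>
     c \<in> tile_centres n (fst (f i)) (snd (f i)) \<and> u = (x + 2*i + 1 + 2*m*q, y + c + 2*n*r))"

lemma column_configE:
  assumes "column_config x y m n f u"
  obtains i q r c where "0 \<le> i" "i < m" "c \<in> tile_centres n (fst (f i)) (snd (f i))"
    "u = (x + 2*i + 1 + 2*m*q, y + c + 2*n*r)"
  using assms unfolding column_config_def by blast

lemma column_configI:
  "0 \<le> i \<Longrightarrow> i < m \<Longrightarrow> c \<in> tile_centres n (fst (f i)) (snd (f i)) \<Longrightarrow>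
   column_config x y m n f (x + 2*i + 1, y + c + 2*n*r)"
  unfolding column_config_def by (intro exI[of _ i] exI[of _ 0] exI[of _ r] exI[of _ c]) auto

lemma column_config_close_eq:
  assumes f: "f \<in> {0..<m} \<rightarrow>\<^sub>E column_states n"
    and u: "column_config x y m n f u" and v: "column_config x y m n f v"
    and close: "\<bar>fst u - fst v\<bar> < 2" "\<bar>snd u - snd v\<bar> < 2"
  shows "u = v"
proof -
  from u obtain i q r c where i: "0 \<le> i" "i < m"
    and c: "c \<in> tile_centres n (fst (f i)) (snd (f i))"
    and u_eq: "u = (x + 2*i + 1 + 2*m*q, y + c + 2*n*r)" by (rule column_configE)
  from v obtain i' q' r' c' where i': "0 \<le> i'" "i' < m"
    and c': "c' \<in> tile_centres n (fst (f i')) (snd (f i'))"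
    and v_eq: "v = (x + 2*i' + 1 + 2*m*q', y + c' + 2*n*r')" by (rule column_configE)
  have "\<bar>(2*i + 1 + 2*m*q) - (2*i' + 1 + 2*m*q')\<bar> < 2" using close(1) u_eq v_eq by simp
  from periodic_odd_close_eq[OF i i' this] have same_column: "i' = i" "q' = q" by simp_all
  obtain G p where Gp: "f i = (G, p)" by fastforce
  have G: "(G, p) \<in> column_states n" using f i Gp by (metis PiE_mem atLeastLessThan_iff)
  have cs: "c \<in> tile_centres n G p" "c' \<in> tile_centres n G p" using c c' Gp same_column by auto
  have "1 \<le> c" "c \<le> 2*n" "1 \<le> c'" "c' \<le> 2*n" using tile_centres_range cs by blast+
  moreover have "\<bar>c - c' + 2*n*(r - r')\<bar> < 2" using close(2) u_eq v_eq by (simp add: algebra_simps)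
  ultimately consider "r = r'" "\<bar>c - c'\<bar> < 2" | "c = 1" "c' = 2*n" | "c = 2*n" "c' = 1"
    using periodic_close_cases[of c "2*n" c' "r - r'"] by auto
  then show ?thesis
  proof cases
    case 1
    then have "c = c' \<or> c' = c + 1 \<or> c = c' + 1" by linarith
    then show ?thesis
      using tile_centres_not_adjacent[OF G] cs u_eq v_eq same_column 1(1) by auto
  qed (use tile_centres_not_wrapping[OF G] cs in auto)
qed

lemma column_config_in_Omega:
  assumes "f \<in> {0..<m} \<rightarrow>\<^sub>E column_states n"
  shows "column_config x y m n f \<in> Omega"
  unfolding Omega_def
proof (intro CollectI allI impI)
  fix u v assume "column_config x y m n f u \<and> column_config x y m n f v \<and> u \<noteq> v"
  then show "interior (tile u) \<inter> interior (tile v) = {}"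
    using column_config_close_eq[OF assms] tile_interiors_meet_close by blast
qed

lemma column_config_shift:
  "column_config x y m n f (a + 2*m*k, b + 2*n*l) = column_config x y m n f (a, b)"
proof -
  have shift: "column_config x y m n f (a + 2*m*k, b + 2*n*l)"
    if "column_config x y m n f (a, b)" for a b k l
  proof -
    from that obtain i q r c where "0 \<le> i" "i < m" "c \<in> tile_centres n (fst (f i)) (snd (f i))"
      "(a, b) = (x + 2*i + 1 + 2*m*q, y + c + 2*n*r)" by (rule column_configE)
    then show ?thesis unfolding column_config_def
      by (intro exI[of _ i] exI[of _ "q + k"] exI[of _ "r + l"] exI[of _ c]) (auto simp: algebra_simps)
  qed
  show ?thesis
    using shift[of a b k l] shift[of "a + 2*m*k" "b + 2*n*l" "-k" "-l"] by auto
qed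

lemma column_config_in_Omega_per:
  assumes "f \<in> {0..<m} \<rightarrow>\<^sub>E column_states n"
  shows "column_config x y m n f \<in> Omega_per (2*m) (2*n)"
  unfolding Omega_per_def
proof (intro CollectI conjI allI column_config_in_Omega[OF assms])
  fix u :: "int \<times> int"
  show "column_config x y m n f (fst u + 2*m, snd u) = column_config x y m n f u"
    using column_config_shift[of x y m n f "fst u" 1 "snd u" 0] by simp
  show "column_config x y m n f (fst u, snd u + 2*n) = column_config x y m n f u"
    using column_config_shift[of x y m n f "fst u" 0 "snd u" 1] by simp
qed

lemma column_config_centre_iff:
  assumes "0 \<le> i" "i < m" "0 \<le> j" "j < n"
  shows "column_config x y m n f (x + 2*i + 1, y + 2*j + 2) \<longleftrightarrow> phase (fst (f i)) (snd (f i)) j"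
proof
  assume "phase (fst (f i)) (snd (f i)) j"
  then have "2*j + 2 \<in> tile_centres n (fst (f i)) (snd (f i))" using in_phase_centre_iff assms(3,4) by blast
  from column_configI[where f = f and r = 0, OF assms(1,2) this] show "column_config x y m n f (x + 2*i + 1, y + 2*j + 2)"
    by (simp add: add.assoc)
next
  assume "column_config x y m n f (x + 2*i + 1, y + 2*j + 2)"
  then obtain i' q r c where i': "0 \<le> i'" "i' < m" and c: "c \<in> tile_centres n (fst (f i')) (snd (f i'))"
    and eq: "(x + 2*i + 1, y + 2*j + 2) = (x + 2*i' + 1 + 2*m*q, y + c + 2*n*r)" by (rule column_configE)
  have "\<bar>(2*i + 1 + 2*m*0) - (2*i' + 1 + 2*m*q)\<bar> < 2" using eq by simp
  from periodic_odd_close_eq(1)[OF assms(1,2) i' this] have "i' = i" by simp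
  moreover have "1 \<le> c" "c \<le> 2*n" using tile_centres_range[OF c] by auto
  moreover have "\<bar>c - (2*j + 2) + 2*n*r\<bar> < 2" using eq by simp
  ultimately have "c = 2*j + 2" using periodic_close_cases[of c "2*n" "2*j + 2" r] assms(3,4) eq by auto
  with c \<open>i' = i\<close> show "phase (fst (f i)) (snd (f i)) j" using in_phase_centre_iff assms(3,4) by blast
qed

lemma column_config_inj:
  assumes "n \<ge> 1"
  shows "inj_on (column_config x y m n) ({0..<m} \<rightarrow>\<^sub>E column_states n)"
proof (rule inj_onI)
  fix f f' assume f: "f \<in> {0..<m} \<rightarrow>\<^sub>E column_states n" and f': "f' \<in> {0..<m} \<rightarrow>\<^sub>E column_states n"
    and eq: "column_config x y m n f = column_config x y m n f'"
  show "f = f'"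
  proof (rule PiE_ext[OF f f'])
    fix i assume i: "i \<in> {0..<m}"
    have "(fst (f i), snd (f i)) = (fst (f' i), snd (f' i))"
    proof (rule column_state_eqI[OF _ _ assms])
      show "(fst (f i), snd (f i)) \<in> column_states n" "(fst (f' i), snd (f' i)) \<in> column_states n"
        using PiE_mem[OF f i] PiE_mem[OF f' i] by simp_all
      fix j assume j: "0 \<le> j" "j < n"
      have "phase (fst (f i)) (snd (f i)) j \<longleftrightarrow> column_config x y m n f (x + 2*i + 1, y + 2*j + 2)"
        using column_config_centre_iff[of i m j n x y f] i j by simp
      also have "\<dots> \<longleftrightarrow> phase (fst (f' i)) (snd (f' i)) j"
        unfolding eq using column_config_centre_iff[of i m j n x y f'] i j by simp
      finally show "phase (fst (f i)) (snd (f i)) j = phase (fst (f' i)) (snd (f' i)) j" .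
    qed
    then show "f i = f' i" by (simp add: prod_eq_iff)
  qed
qed

lemma column_config_covers:
  assumes "0 \<le> i" "i < m" "c \<in> tile_centres n (fst (f i)) (snd (f i))"
    and "x + 2*i \<le> a" "a \<le> x + 2*i + 1" "y + c + 2*n*r - 1 \<le> b" "b \<le> y + c + 2*n*r"
  shows "\<not> vacant (column_config x y m n f) (a, b)"
proof -
  have "column_config x y m n f (x + 2*i + 1, y + c + 2*n*r)"
    by (rule column_configI[where f = f, OF assms(1-3)])
  moreover have "face (a, b) \<subseteq> tile (x + 2*i + 1, y + c + 2*n*r)"
    by (rule face_subset_tile) (use assms in auto)
  ultimately show ?thesis unfolding vacant_def by blast
qed

definition column_vacancies ::
  "int \<Rightarrow> int \<Rightarrow> int \<Rightarrow> (int \<Rightarrow> int set \<times> bool) \<Rightarrow> (int \<times> int) set" where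
  "column_vacancies x y m f = (\<Union>i\<in>{0..<m}. \<Union>e\<in>{0, 1}.
     (\<lambda>r. (x + 2*i + e, y + r)) ` vacant_rows (fst (f i)) (snd (f i)))"

lemma vacant_faces_column_config:
  assumes f: "f \<in> {0..<m} \<rightarrow>\<^sub>E column_states n"
    and vac: "vacant (column_config x y m n f) (a, b)"
    and inside: "face (a, b) \<subseteq> rect x y (2*m) (2*n)"
  shows "(a, b) \<in> column_vacancies x y m f"
proof -
  define i where "i = (a - x) div 2"
  have i: "0 \<le> i" "i < m" "x + 2*i \<le> a" "a \<le> x + 2*i + 1" and e: "a - x - 2*i \<in> {0, 1}"
    using face_subset_rect[OF inside] unfolding i_def by auto
  have row: "0 \<le> b - y" "b - y < 2*n" using face_subset_rect[OF inside] by auto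
  have "f i \<in> column_states n" using f i(1,2) by auto
  then have G: "(fst (f i), snd (f i)) \<in> column_states n" by simp
  have "b - y \<in> vacant_rows (fst (f i)) (snd (f i))"
  proof (rule ccontr)
    assume "b - y \<notin> vacant_rows (fst (f i)) (snd (f i))"
    then obtain c r where c: "c \<in> tile_centres n (fst (f i)) (snd (f i))"
      and near: "c + 2*n*r - 1 \<le> b - y" "b - y \<le> c + 2*n*r"
      using row_covered[OF G row] by blast
    have "\<not> vacant (column_config x y m n f) (a, b)"
      by (rule column_config_covers[where f = f and r = r, OF i(1,2) c i(3,4)]) (use near in linarith)+
    with vac show False by contradiction
  qed
  with i e show ?thesis unfolding column_vacancies_def
    by (intro UN_I[of i] UN_I[of "a - x - 2*i"] image_eqI[of _ _ "b - y"]) auto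
qed

lemma vacant_count_column_config_le:
  assumes f: "f \<in> {0..<m} \<rightarrow>\<^sub>E column_states n"
  shows "vacant_count x y (2*m) (2*n) (column_config x y m n f)
    \<le> (\<Sum>i\<in>{0..<m}. 2 * card (fst (f i)))"
proof -
  have fin: "finite (fst (f i))" if "i \<in> {0..<m}" for i
  proof -
    have "(fst (f i), snd (f i)) \<in> column_states n" using f that by auto
    then show ?thesis by (rule column_statesD(3))
  qed
  have "{p. vacant (column_config x y m n f) p \<and> face p \<subseteq> rect x y (2*m) (2*n)} \<subseteq> column_vacancies x y m f"
    using vacant_faces_column_config[OF f] by auto
  moreover have "finite (column_vacancies x y m f)"
    unfolding column_vacancies_def vacant_rows_def using fin by auto
  ultimately have "vacant_count x y (2*m) (2*n) (column_config x y m n f) \<le> card (column_vacancies x y m f)"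
    unfolding vacant_count_def by (rule card_mono[rotated])
  also have "\<dots> \<le> (\<Sum>i\<in>{0..<m}. \<Sum>e\<in>{0, 1::int}. card ((\<lambda>r. (x + 2*i + e, y + r)) ` vacant_rows (fst (f i)) (snd (f i))))"
    unfolding column_vacancies_def by (intro card_UN_le[THEN order_trans] sum_mono card_UN_le) auto
  also have "\<dots> \<le> (\<Sum>i\<in>{0..<m}. \<Sum>e\<in>{0, 1::int}. card (fst (f i)))"
    using fin by (intro sum_mono card_image_le[THEN order_trans] card_vacant_rows_le) (auto simp: vacant_rows_def)
  also have "\<dots> = (\<Sum>i\<in>{0..<m}. 2 * card (fst (f i)))" by (simp add: mult_2)
  finally show ?thesis .
qed

lemma weight_column_config_ge:
  assumes f: "f \<in> {0..<m} \<rightarrow>\<^sub>E column_states n" and lam: "1 \<le> lam"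
  shows "(\<Prod>i\<in>{0..<m}. (lam powr (-1/2)) ^ card (fst (f i)))
    \<le> weight x y (2*m) (2*n) lam (column_config x y m n f)"
proof -
  let ?V = "vacant_count x y (2*m) (2*n) (column_config x y m n f)"
  have "real ?V \<le> real (\<Sum>i\<in>{0..<m}. 2 * card (fst (f i)))"
    using vacant_count_column_config_le[OF f, of x y] by (simp only: of_nat_le_iff)
  then have V: "real ?V \<le> (\<Sum>i\<in>{0..<m}. 2 * real (card (fst (f i))))"
    by (simp add: of_nat_sum)
  have "(\<Prod>i\<in>{0..<m}. (lam powr (-1/2)) ^ card (fst (f i)))
      = (\<Prod>i\<in>{0..<m}. lam powr (-1/2 * real (card (fst (f i)))))"
    using lam by (simp add: powr_realpow[symmetric] powr_powr)
  also have "\<dots> = lam powr (- (1/4) * (\<Sum>i\<in>{0..<m}. 2 * real (card (fst (f i)))))"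
    using lam by (simp add: powr_sum sum_distrib_left)
  also have "\<dots> \<le> lam powr (- (1/4) * real ?V)"
    using V lam by (intro powr_mono) simp_all
  finally show ?thesis by (simp add: weight_def)
qed

lemma finite_column_states: "finite (column_states n)"
  by (rule finite_subset[of _ "Pow {0..<n} \<times> UNIV"]) (auto simp: column_states_def)

lemma sum_column_states_power_ge:
  fixes t :: real
  assumes "0 \<le> t" "t \<le> 1"
  shows "(1 + t) ^ nat n \<le> (\<Sum>g\<in>column_states n. t ^ card (fst g))"
proof -
  define E where "E = {G. G \<subseteq> {0..<n} \<and> even (card G)}"
  have states: "column_states n = E \<times> UNIV" by (auto simp: column_states_def E_def)
  have "(\<Sum>g\<in>column_states n. t ^ card (fst g)) = (\<Sum>G\<in>E. \<Sum>p\<in>(UNIV :: bool set). t ^ card G)"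
    unfolding states sum.cartesian_product by (simp add: case_prod_unfold)
  also have "\<dots> = 2 * (\<Sum>G\<in>E. t ^ card G)"
    by (simp add: UNIV_bool sum_distrib_left)
  finally show ?thesis
    using power_card_le_twice_sum_even_subsets[of "{0..<n}" t] assms unfolding E_def by simp
qed

lemma Z_per_ge_power:
  assumes "1 \<le> m" "1 \<le> n" and lam: "1 \<le> lam"
  shows "(1 + lam powr (-1/2)) ^ nat (m*n) \<le> Z_per x y (2*m) (2*n) lam"
proof -
  define t where "t = lam powr (-1/2)"
  have t: "0 \<le> t" "t \<le> 1" unfolding t_def using powr_mono[of "-1/2" 0 lam] lam by simp_all
  define P where "P = {0..<m} \<rightarrow>\<^sub>E column_states n"
  let ?\<sigma> = "column_config x y m n"
  have "(1 + t) ^ nat (m*n) = (\<Prod>i\<in>{0..<m}. (1 + t) ^ nat n)"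
    using assms(1,2) by (simp add: nat_mult_distrib) (metis mult.commute power_mult)
  also have "\<dots> \<le> (\<Prod>i\<in>{0..<m}. \<Sum>g\<in>column_states n. t ^ card (fst g))"
    by (intro prod_mono) (use sum_column_states_power_ge[OF t] t in auto)
  also have "\<dots> = (\<Sum>f\<in>P. \<Prod>i\<in>{0..<m}. t ^ card (fst (f i)))"
    unfolding P_def by (rule prod_sum_PiE) (auto simp: finite_column_states)
  also have "\<dots> \<le> (\<Sum>f\<in>P. weight x y (2*m) (2*n) lam (?\<sigma> f))"
    unfolding P_def t_def by (intro sum_mono weight_column_config_ge lam)
  also have "\<dots> = (\<Sum>\<sigma>\<in>?\<sigma> ` P. weight x y (2*m) (2*n) lam \<sigma>)"
    unfolding P_def using column_config_inj[OF assms(2)] by (simp add: sum.reindex)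
  also have "\<dots> \<le> Z_per x y (2*m) (2*n) lam"
    unfolding Z_per_def P_def using assms(1,2) column_config_in_Omega_per
    by (intro sum_mono2 Omega_per_finite) (auto simp: weight_def)
  finally show ?thesis by (simp add: t_def)
qed

lemma powr_minus_half_less:
  fixes d lam :: real
  assumes "0 < d" "1 / d^2 < lam"
  shows "lam powr (-1/2) < d"
proof -
  have "0 < 1 / d^2" using assms(1) by simp
  with assms(2) have "0 < lam" by linarith
  have "1 / d < sqrt lam"
    using assms by (metis power_one_over real_less_rsqrt)
  then have "inverse (sqrt lam) < d"
    using assms(1) \<open>0 < lam\<close> by (simp add: field_simps)
  then show ?thesis using \<open>0 < lam\<close> by (simp add: powr_minus powr_half_sqrt)
qed

lemma ln_one_plus_ge_linear:
  fixes c t :: real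
  assumes "0 < t" "t \<le> 1" "t \<le> 1 - 4*c"
  shows "4*c*t \<le> ln (1 + t)"
proof -
  have "t - t^2 \<le> ln (1 + t)" using ln_one_plus_pos_lower_bound assms(1,2) by simp
  moreover have "0 \<le> t * (1 - 4*c - t)" using assms by simp
  ultimately show ?thesis by (simp add: power2_eq_square algebra_simps)
qed

theorem corollary4p3:
  fixes c :: real
  assumes "c < 1/4"
  shows "\<exists>lam0::real. \<forall>lam>lam0. \<forall>x y K L :: int. even_rect x y K L \<longrightarrow>
           Z_per x y K L lam \<ge> exp (c * lam powr (-1/2) * real_of_int (K * L))"
proof -
  define d where "d = 1 - 4*c"
  have "0 < d" using assms by (simp add: d_def)
  show ?thesis
  proof (intro exI[of _ "max 1 (1 / d^2)"] allI impI)
    fix lam :: real and x y K L :: int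
    assume lam: "max 1 (1 / d^2) < lam" and r: "even_rect x y K L"
    define t where "t = lam powr (-1/2)"
    have t: "0 < t" "t \<le> 1" "t \<le> 1 - 4*c"
      using lam powr_minus_half_less[OF \<open>0 < d\<close>, of lam] powr_mono[of "-1/2" 0 lam]
      by (auto simp: t_def d_def)
    obtain m n where K: "K = 2*m" and L: "L = 2*n" and mn: "1 \<le> m" "1 \<le> n"
      using r by (auto simp: even_rect_def elim!: evenE)
    have "exp (c * lam powr (-1/2) * real_of_int (K * L)) = exp (real (nat (m*n)) * (4*c*t))"
      using mn by (simp add: K L t_def algebra_simps)
    also have "\<dots> \<le> exp (real (nat (m*n)) * ln (1 + t))"
      using ln_one_plus_ge_linear[OF t] by (simp add: mult_left_mono)
    also have "\<dots> = (1 + t) ^ nat (m*n)"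
      using t by (simp add: exp_of_nat_mult)
    also have "\<dots> \<le> Z_per x y K L lam"
      unfolding K L t_def using Z_per_ge_power[OF mn] lam by simp
    finally show "Z_per x y K L lam \<ge> exp (c * lam powr (-1/2) * real_of_int (K * L))" .
  qed
qed

end
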